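(* Assume the setting: $G$ an infinite discrete group, $B$ a unital C$^*$-algebra with action $\alpha$, $A_1=B\rtimes_{\alpha,r}G$ with implementing unitaries $u_g$, $\phi_1$ a faithful $\alpha$-invariant state on $B$ extended to $A_1$ by vanishing on $Bu_g$ for $g\neq e$, $A_2\neq\mathbb{C}1$ a unital C$^*$-algebra with faithful state $\phi_2$, and $(A,\phi)=(A_1,\phi_1)*(A_2,\phi_2)$ the reduced free product. Let $D_0$ be the C$^*$-subalgebra of $A$ generated by $\bigcup_{g\in G}u_g^*A_2u_g$. Then $D_0$ has trivial relative commutant in $A$: if $x\in A$ commutes with every element of $D_0$, then $x\in\mathbb{C}1$. Consequently the C$^*$-subalgebra $D$ generated by $B\cup\bigcup_{g\in G}u_g^*A_2u_g$ also has trivial relative commutant in $A$.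
   Context: Reduced free product $(A,\phi)$: the unital C$^*$-algebra generated by copies of $A_1,A_2$, with a state $\phi$ having faithful GNS representation, restricting to $\phi_i$ on $A_i$, and such that $A_1,A_2$ are free with respect to $\phi$ (i.e. $\phi(a_1\cdots a_n)=0$ whenever each $a_j\in\ker\phi$ lies in one of the algebras and consecutive $a_j$ lie in different algebras). *)

theory Defs
  imports "HOL-Analysis.Analysis"
begin

text \<open>Abstract ambient unital C*-algebra: a real Banach algebra with unit, a central
  imaginary unit iu (so it is a complex Banach algebra) and an involution star
  satisfying the C*-identity.\<close>

definition cstar_ambient :: "('a::{real_normed_algebra_1,banach} \<Rightarrow> 'a) \<Rightarrow> 'a \<Rightarrow> bool" where
  "cstar_ambient star iu \<longleftrightarrow>
     iu * iu = - 1 \<and> (\<forall>x. iu * x = x * iu) \<and> (\<forall>x. norm (iu * x) = norm x) \<and>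
     (\<forall>x. star (star x) = x) \<and> (\<forall>x y. star (x + y) = star x + star y) \<and>
     (\<forall>r x. star (scaleR r x) = scaleR r (star x)) \<and>
     (\<forall>x y. star (x * y) = star y * star x) \<and> star iu = - iu \<and>
     (\<forall>x. norm (star x * x) = (norm x)\<^sup>2)"

definition sc :: "'a::real_normed_algebra_1 \<Rightarrow> complex \<Rightarrow> 'a" where
  "sc iu c = scaleR (Re c) 1 + scaleR (Im c) iu"

definition cstar_sub :: "('a::{real_normed_algebra_1,banach} \<Rightarrow> 'a) \<Rightarrow> 'a \<Rightarrow> 'a set \<Rightarrow> bool" where
  "cstar_sub star iu S \<longleftrightarrow> 1 \<in> S \<and> closed S \<and>
     (\<forall>x\<in>S. \<forall>y\<in>S. x + y \<in> S \<and> x * y \<in> S) \<and>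
     (\<forall>x\<in>S. \<forall>c. sc iu c * x \<in> S) \<and> (\<forall>x\<in>S. star x \<in> S)"

definition cgen :: "('a::{real_normed_algebra_1,banach} \<Rightarrow> 'a) \<Rightarrow> 'a \<Rightarrow> 'a set \<Rightarrow> 'a set" where
  "cgen star iu X = \<Inter>{S. cstar_sub star iu S \<and> X \<subseteq> S}"

definition clinear_on :: "'a::real_normed_algebra_1 \<Rightarrow> 'a set \<Rightarrow> ('a \<Rightarrow> 'b::real_vector) \<Rightarrow> (complex \<Rightarrow> 'b \<Rightarrow> 'b) \<Rightarrow> bool" where
  "clinear_on iu S f smul \<longleftrightarrow> (\<forall>x\<in>S. \<forall>y\<in>S. f (x + y) = f x + f y) \<and>
     (\<forall>x\<in>S. \<forall>c. f (sc iu c * x) = smul c (f x))"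

definition is_state :: "('a::{real_normed_algebra_1,banach} \<Rightarrow> 'a) \<Rightarrow> 'a \<Rightarrow> 'a set \<Rightarrow> ('a \<Rightarrow> complex) \<Rightarrow> bool" where
  "is_state star iu S \<phi> \<longleftrightarrow> clinear_on iu S \<phi> (*) \<and> \<phi> 1 = 1 \<and>
     (\<forall>x\<in>S. Im (\<phi> (star x * x)) = 0 \<and> Re (\<phi> (star x * x)) \<ge> 0)"

definition faithful_state :: "('a::{real_normed_algebra_1,banach} \<Rightarrow> 'a) \<Rightarrow> 'a \<Rightarrow> 'a set \<Rightarrow> ('a \<Rightarrow> complex) \<Rightarrow> bool" where
  "faithful_state star iu S \<phi> \<longleftrightarrow> is_state star iu S \<phi> \<and>
     (\<forall>x\<in>S. \<phi> (star x * x) = 0 \<longrightarrow> x = 0)"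

text \<open>Faithful GNS representation: pi_phi(x) = 0 iff phi(y* x* x y) = 0 for all y.\<close>
definition gns_faithful :: "('a::{real_normed_algebra_1,banach} \<Rightarrow> 'a) \<Rightarrow> 'a set \<Rightarrow> ('a \<Rightarrow> complex) \<Rightarrow> bool" where
  "gns_faithful star S \<phi> \<longleftrightarrow>
     (\<forall>x\<in>S. (\<forall>y\<in>S. \<phi> (star y * star x * x * y) = 0) \<longrightarrow> x = 0)"

definition free_pair :: "('a::real_normed_algebra_1 \<Rightarrow> complex) \<Rightarrow> 'a set \<Rightarrow> 'a set \<Rightarrow> bool" where
  "free_pair \<phi> S1 S2 \<longleftrightarrow>
     (\<forall>xs ks. xs \<noteq> [] \<and> length ks = length xs \<and>
        (\<forall>i<length xs. (if ks ! i then xs ! i \<in> S1 else xs ! i \<in> S2) \<and> \<phi> (xs ! i) = 0) \<and>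
        (\<forall>i. Suc i < length xs \<longrightarrow> ks ! i \<noteq> ks ! Suc i)
        \<longrightarrow> \<phi> (prod_list xs) = 0)"

definition star_action :: "('a::{real_normed_algebra_1,banach} \<Rightarrow> 'a) \<Rightarrow> 'a \<Rightarrow> 'a set \<Rightarrow> ('g::group_add \<Rightarrow> 'a \<Rightarrow> 'a) \<Rightarrow> bool" where
  "star_action star iu B \<alpha> \<longleftrightarrow>
     (\<forall>g. bij_betw (\<alpha> g) B B) \<and>
     (\<forall>g. \<forall>x\<in>B. \<forall>y\<in>B. \<alpha> g (x + y) = \<alpha> g x + \<alpha> g y \<and> \<alpha> g (x * y) = \<alpha> g x * \<alpha> g y) \<and>
     (\<forall>g. \<forall>x\<in>B. \<forall>c. \<alpha> g (sc iu c * x) = sc iu c * \<alpha> g x) \<and>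
     (\<forall>g. \<forall>x\<in>B. \<alpha> g (star x) = star (\<alpha> g x)) \<and>
     (\<forall>x\<in>B. \<alpha> 0 x = x) \<and> (\<forall>g h. \<forall>x\<in>B. \<alpha> (g + h) x = \<alpha> g (\<alpha> h x))"

text \<open>A1 is (a copy of) the reduced crossed product of B by alpha, with implementing
  unitaries u: A1 is generated by B and a covariant unitary representation u, and
  there is a bounded linear map E : A1 \<rightarrow> B fixing B, killing B u_g for g \<noteq> e, and
  faithful. This characterizes the reduced crossed product up to canonical isomorphism.\<close>
definition reduced_crossed_product ::
  "('a::{real_normed_algebra_1,banach} \<Rightarrow> 'a) \<Rightarrow> 'a \<Rightarrow> 'a set \<Rightarrow> ('g::group_add \<Rightarrow> 'a \<Rightarrow> 'a) \<Rightarrow> ('g \<Rightarrow> 'a) \<Rightarrow> 'a set \<Rightarrow> bool" where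
  "reduced_crossed_product star iu B \<alpha> u A1 \<longleftrightarrow>
     cstar_sub star iu B \<and> star_action star iu B \<alpha> \<and>
     (\<forall>g. star (u g) * u g = 1 \<and> u g * star (u g) = 1) \<and>
     (\<forall>g h. u (g + h) = u g * u h) \<and>
     (\<forall>g. \<forall>b\<in>B. u g * b * star (u g) = \<alpha> g b) \<and>
     A1 = cgen star iu (B \<union> range u) \<and>
     (\<exists>E. E ` A1 \<subseteq> B \<and> clinear_on iu A1 E (\<lambda>c x. sc iu c * x) \<and> continuous_on A1 E \<and>
          (\<forall>b\<in>B. E b = b) \<and> (\<forall>g. \<forall>b\<in>B. g \<noteq> 0 \<longrightarrow> E (b * u g) = 0) \<and>
          (\<forall>x\<in>A1. E (star x * x) = 0 \<longrightarrow> x = 0))"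

end

(*
  Fix a centered a in A2 with phi(a^* a) <> 0 and put X_g = u_g^* a u_g. As g leaves every finite
  subset of the infinite group G, the X_g become asymptotically free from A:
  phi(v X_g^* c X_g w) tends to phi(a^* a) phi(c) phi(v w) for all v, c, w in A. For products v, c, w
  of reduced words this holds exactly for all but finitely many g, because multiplying a reduced
  word by u_g or u_g^* yields a reduced word again once g avoids finitely many values; it extends
  to all of A since these products span a dense subalgebra and states are bounded. If x commutes
  with every X_g, comparing the limits for (v, x, w) and (v, 1, x w) gives
  phi(v x w) = phi(x) phi(v w) for all v, w, so x - phi(x) 1 lies in the kernel of the GNS
  representation of phi, which is trivial.
*)

theory Submission
  imports Defs "HOL-Computational_Algebra.Formal_Power_Series"
begin

lemma eventually_cofinite_neq: "\<forall>\<^sub>F x in cofinite. x \<noteq> a"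
  by (simp add: eventually_cofinite)

lemma clinear_on_diff_mult:
  "clinear_on iu S f (*) \<Longrightarrow> clinear_on iu S g (*) \<Longrightarrow> clinear_on iu S (\<lambda>x. f x - c * g x) (*)"
  unfolding clinear_on_def by (simp add: algebra_simps)

section \<open>Unital C*-algebras\<close>

lemma summable_norm_binomial_half:
  fixes h :: "'a::real_normed_algebra_1"
  assumes "norm h < 1"
  shows "summable (\<lambda>n. norm (((1/2::real) gchoose n) *\<^sub>R (- h) ^ n))"
proof -
  define c where "c n = ((1/2::real) gchoose n)" for n
  have "summable (\<lambda>n. norm (c n * norm h ^ n))"
  proof (rule powser_insidea)
    have "\<bar>(1 + norm h) / 2\<bar> < 1" using assms by simp
    then show "summable (\<lambda>n. c n * ((1 + norm h) / 2) ^ n)"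
      using gen_binomial_real[of "(1 + norm h) / 2" "1/2"] unfolding c_def by (simp add: sums_iff)
  qed (use assms in simp)
  then show ?thesis
  proof (rule summable_comparison_test')
    fix n
    have "norm ((- h) ^ n) \<le> norm h ^ n"
      using norm_power_ineq[of "- h" n] by simp
    then show "norm (norm (((1/2::real) gchoose n) *\<^sub>R (- h) ^ n)) \<le> norm (c n * norm h ^ n)"
      by (simp add: c_def abs_mult mult_left_mono)
  qed
qed

lemma binomial_half_series_square:
  fixes h :: "'a::{real_normed_algebra_1,banach}"
  assumes "norm h < 1"
  shows "(\<Sum>n. ((1/2::real) gchoose n) *\<^sub>R (- h) ^ n) * (\<Sum>n. ((1/2::real) gchoose n) *\<^sub>R (- h) ^ n)
      = 1 - h"
proof -
  define f where "f n = ((1/2::real) gchoose n) *\<^sub>R (- h) ^ n" for n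
  note norm_summable = summable_norm_binomial_half[OF assms, folded f_def]
  have "(\<Sum>n. f n) * (\<Sum>n. f n) = (\<Sum>n. \<Sum>i\<le>n. f i * f (n - i))"
    by (rule Cauchy_product[OF norm_summable norm_summable])
  also have "\<dots> = (\<Sum>n. ((1::real) gchoose n) *\<^sub>R (- h) ^ n)"
  proof (rule suminf_cong)
    fix n
    have "(\<Sum>i\<le>n. f i * f (n - i)) = (\<Sum>i\<le>n. ((1/2::real) gchoose i) * ((1/2) gchoose (n - i))) *\<^sub>R (- h) ^ n"
      by (simp add: f_def scaleR_sum_left mult_ac power_add[symmetric])
    also have "(\<Sum>i\<le>n. ((1/2::real) gchoose i) * ((1/2) gchoose (n - i))) = (1::real) gchoose n"
      using gbinomial_Vandermonde[of "1/2::real" "1/2" n] by (simp add: atLeast0AtMost)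
    finally show "(\<Sum>i\<le>n. f i * f (n - i)) = ((1::real) gchoose n) *\<^sub>R (- h) ^ n" .
  qed
  also have "\<dots> = 1 - h"
  proof -
    have "((1::real) gchoose n) = 0" if "n \<notin> {0, 1}" for n
      using that binomial_gbinomial[of 1 n, where 'a=real] by (simp add: binomial_eq_0)
    then have "(\<lambda>n. ((1::real) gchoose n) *\<^sub>R (- h) ^ n) sums (\<Sum>n\<in>{0, 1}. ((1::real) gchoose n) *\<^sub>R (- h) ^ n)"
      by (intro sums_finite) auto
    then show ?thesis by (simp add: sums_iff)
  qed
  finally show ?thesis by (simp add: f_def)
qed

locale unital_cstar =
  fixes star :: "'a::{real_normed_algebra_1,banach} \<Rightarrow> 'a" and iu :: 'a
  assumes cstar_ambient: "cstar_ambient star iu"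
begin

lemma iu_mult_iu: "iu * iu = - 1"
  and iu_commute: "iu * x = x * iu"
  and norm_iu_mult: "norm (iu * x) = norm x"
  and star_star [simp]: "star (star x) = x"
  and star_add: "star (x + y) = star x + star y"
  and star_scaleR: "star (r *\<^sub>R x) = r *\<^sub>R star x"
  and star_mult: "star (x * y) = star y * star x"
  and star_iu: "star iu = - iu"
  and norm_star_mult_self: "norm (star x * x) = (norm x)\<^sup>2"
  using cstar_ambient unfolding cstar_ambient_def by blast+

lemma star_zero [simp]: "star 0 = 0"
  using star_scaleR[of 0 0] by simp

lemma star_minus: "star (- x) = - star x"
  using star_scaleR[of "-1" x] by simp

lemma star_diff: "star (x - y) = star x - star y"
  by (simp only: diff_conv_add_uminus star_add star_minus)

lemma star_one [simp]: "star 1 = 1"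
  using star_mult[of "star 1" 1] by simp

lemma star_power: "star (x ^ n) = star x ^ n"
  by (induction n) (simp_all add: star_mult power_commutes)

lemma norm_star [simp]: "norm (star x) = norm x"
proof -
  have le: "norm y \<le> norm (star y)" for y
  proof (cases "y = 0")
    case False
    have "norm y * norm y \<le> norm (star y) * norm y"
      using norm_star_mult_self[of y] norm_mult_ineq[of "star y" y] by (simp add: power2_eq_square)
    then show ?thesis using False by simp
  qed simp
  show ?thesis using le[of x] le[of "star x"] by simp
qed

lemma bounded_linear_star: "bounded_linear star"
  by (rule bounded_linear_intro[where K=1]) (simp_all add: star_add star_scaleR)

lemma sc_commute: "sc iu c * x = x * sc iu c"
  by (simp add: sc_def algebra_simps iu_commute)

lemma mult_sc_left_commute: "x * (sc iu c * y) = sc iu c * (x * y)"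
  by (simp only: mult.assoc[symmetric] sc_commute[of c x])

lemma sc_one [simp]: "sc iu 1 = 1"
  and sc_zero [simp]: "sc iu 0 = 0"
  and sc_of_real_mult: "sc iu (complex_of_real r) * x = r *\<^sub>R x"
  and sc_minus_one_mult: "sc iu (- 1) * x = - x"
  and sc_ii: "sc iu \<i> = iu"
  by (simp_all add: sc_def)

lemma star_sc_mult: "star (sc iu c * x) = sc iu (cnj c) * star x"
  by (simp add: sc_def star_mult star_add star_scaleR star_iu algebra_simps iu_commute)

lemma cstar_sub_one: "cstar_sub star iu S \<Longrightarrow> 1 \<in> S"
  and cstar_sub_closed: "cstar_sub star iu S \<Longrightarrow> closed S"
  and cstar_sub_add: "cstar_sub star iu S \<Longrightarrow> x \<in> S \<Longrightarrow> y \<in> S \<Longrightarrow> x + y \<in> S"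
  and cstar_sub_mult: "cstar_sub star iu S \<Longrightarrow> x \<in> S \<Longrightarrow> y \<in> S \<Longrightarrow> x * y \<in> S"
  and cstar_sub_sc_mult: "cstar_sub star iu S \<Longrightarrow> x \<in> S \<Longrightarrow> sc iu c * x \<in> S"
  and cstar_sub_star: "cstar_sub star iu S \<Longrightarrow> x \<in> S \<Longrightarrow> star x \<in> S"
  by (simp_all add: cstar_sub_def)

lemma cstar_sub_sc: "cstar_sub star iu S \<Longrightarrow> sc iu c \<in> S"
  using cstar_sub_sc_mult[of S 1 c] cstar_sub_one by simp

lemma cstar_sub_zero: "cstar_sub star iu S \<Longrightarrow> 0 \<in> S"
  using cstar_sub_sc[of S 0] by simp

lemma cstar_sub_minus: "cstar_sub star iu S \<Longrightarrow> x \<in> S \<Longrightarrow> - x \<in> S"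
  using cstar_sub_sc_mult[of S x "-1"] by (simp add: sc_minus_one_mult)

lemma cstar_sub_diff: "cstar_sub star iu S \<Longrightarrow> x \<in> S \<Longrightarrow> y \<in> S \<Longrightarrow> x - y \<in> S"
  using cstar_sub_add cstar_sub_minus by (metis diff_conv_add_uminus)

lemma cstar_sub_scaleR: "cstar_sub star iu S \<Longrightarrow> x \<in> S \<Longrightarrow> r *\<^sub>R x \<in> S"
  using cstar_sub_sc_mult[of S x "complex_of_real r"] by (simp add: sc_of_real_mult)

lemma cstar_sub_power: "cstar_sub star iu S \<Longrightarrow> x \<in> S \<Longrightarrow> x ^ n \<in> S"
  by (induction n) (simp_all add: cstar_sub_one cstar_sub_mult)

lemma cstar_sub_sum: "cstar_sub star iu S \<Longrightarrow> (\<And>i. i \<in> I \<Longrightarrow> f i \<in> S) \<Longrightarrow> sum f I \<in> S"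
  by (induction I rule: infinite_finite_induct) (simp_all add: cstar_sub_zero cstar_sub_add)

lemma cstar_sub_cgen: "cstar_sub star iu (cgen star iu X)"
  unfolding cgen_def cstar_sub_def by (auto intro!: closed_Inter)

lemma subset_cgen: "X \<subseteq> cgen star iu X"
  unfolding cgen_def by auto

lemma cgen_least: "cstar_sub star iu S \<Longrightarrow> X \<subseteq> S \<Longrightarrow> cgen star iu X \<subseteq> S"
  unfolding cgen_def by auto

lemma cgen_mono: "X \<subseteq> Y \<Longrightarrow> cgen star iu X \<subseteq> cgen star iu Y"
  using cgen_least[OF cstar_sub_cgen] subset_cgen by blast

lemma cstar_sub_closure:
  assumes "1 \<in> V"
    and "\<And>x y. x \<in> V \<Longrightarrow> y \<in> V \<Longrightarrow> x + y \<in> V"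
    and "\<And>x y. x \<in> V \<Longrightarrow> y \<in> V \<Longrightarrow> x * y \<in> V"
    and "\<And>x c. x \<in> V \<Longrightarrow> sc iu c * x \<in> V"
    and "\<And>x. x \<in> V \<Longrightarrow> star x \<in> V"
  shows "cstar_sub star iu (closure V)"
  unfolding cstar_sub_def
proof (intro conjI ballI allI)
  show "1 \<in> closure V" using assms(1) closure_subset by blast
  fix x assume "x \<in> closure V"
  then obtain f where f: "\<And>n. f n \<in> V" "f \<longlonglongrightarrow> x" unfolding closure_sequential by blast
  fix y assume "y \<in> closure V"
  then obtain h where h: "\<And>n. h n \<in> V" "h \<longlonglongrightarrow> y" unfolding closure_sequential by blast
  show "x + y \<in> closure V" unfolding closure_sequential
    using f h assms(2) by (intro exI[of _ "\<lambda>n. f n + h n"]) (auto intro: tendsto_add)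
  show "x * y \<in> closure V" unfolding closure_sequential
    using f h assms(3) by (intro exI[of _ "\<lambda>n. f n * h n"]) (auto intro: tendsto_mult)
next
  fix x c assume "x \<in> closure V"
  then obtain f where f: "\<And>n. f n \<in> V" "f \<longlonglongrightarrow> x" unfolding closure_sequential by blast
  show "sc iu c * x \<in> closure V" unfolding closure_sequential
    using f assms(4) by (intro exI[of _ "\<lambda>n. sc iu c * f n"]) (auto intro: tendsto_mult)
  show "star x \<in> closure V" unfolding closure_sequential
    using f assms(5) bounded_linear.tendsto[OF bounded_linear_star f(2)]
    by (intro exI[of _ "\<lambda>n. star (f n)"]) auto
qed simp

lemma cartesian_decomposition:
  assumes S: "cstar_sub star iu S" and x: "x \<in> S"
  obtains h1 h2 where "h1 \<in> S" "h2 \<in> S" "star h1 = h1" "star h2 = h2"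
    "x = h1 + iu * h2" "star x = h1 - iu * h2" "norm h1 \<le> norm x" "norm h2 \<le> norm x"
proof
  define h1 where "h1 = (1/2) *\<^sub>R (x + star x)"
  define h2 where "h2 = (1/2) *\<^sub>R (- iu * (x - star x))"
  have iu: "iu \<in> S" using cstar_sub_sc[OF S, of \<i>] by (simp add: sc_ii)
  show "h1 \<in> S" "h2 \<in> S" unfolding h1_def h2_def using x iu
    by (intro cstar_sub_scaleR[OF S] cstar_sub_add[OF S] cstar_sub_mult[OF S] cstar_sub_minus[OF S]
        cstar_sub_diff[OF S] cstar_sub_star[OF S]; simp)+
  show "star h1 = h1" unfolding h1_def by (simp add: star_scaleR star_add add.commute)
  show "star h2 = h2" unfolding h2_def
    by (simp add: star_scaleR star_mult star_minus star_iu star_diff iu_commute algebra_simps)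
  have iu_h2: "iu * h2 = (1/2) *\<^sub>R (x - star x)"
    unfolding h2_def by (simp add: mult.assoc[symmetric] iu_mult_iu algebra_simps)
  show "x = h1 + iu * h2" "star x = h1 - iu * h2"
    unfolding iu_h2 h1_def by (simp_all add: algebra_simps flip: scaleR_add_right scaleR_diff_right)
  show "norm h1 \<le> norm x"
    unfolding h1_def using norm_triangle_ineq[of x "star x"] by simp
  show "norm h2 \<le> norm x"
    unfolding h2_def using norm_triangle_ineq4[of x "star x"]
    by (simp add: norm_iu_mult)
qed

lemma selfadjoint_sqrt_one_minus:
  assumes S: "cstar_sub star iu S" and h: "h \<in> S" "star h = h" "norm h < 1"
  obtains k where "k \<in> S" "star k = k" "k * k = 1 - h"
proof
  define f where "f = (\<lambda>n. ((1/2::real) gchoose n) *\<^sub>R (- h) ^ n)"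
  have summable: "summable f"
    using summable_norm_cancel[OF summable_norm_binomial_half[OF h(3)]] by (simp add: f_def)
  show "suminf f \<in> S"
  proof (rule closed_sequentially[OF cstar_sub_closed[OF S]])
    show "(\<lambda>n. \<Sum>i<n. f i) \<longlonglongrightarrow> suminf f" by (rule summable_LIMSEQ[OF summable])
    show "(\<Sum>i<n. f i) \<in> S" for n
      unfolding f_def using h by (intro cstar_sub_sum[OF S] cstar_sub_scaleR[OF S]
          cstar_sub_power[OF S] cstar_sub_minus[OF S])
  qed
  have "star (suminf f) = (\<Sum>n. star (f n))"
    by (rule bounded_linear.suminf[OF bounded_linear_star summable])
  then show "star (suminf f) = suminf f"
    by (simp add: f_def star_scaleR star_power star_minus h(2))
  show "suminf f * suminf f = 1 - h"
    unfolding f_def by (rule binomial_half_series_square[OF h(3)])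
qed

inductive_set cspan :: "'a set \<Rightarrow> 'a set" for X where
  cspan_base: "x \<in> X \<Longrightarrow> x \<in> cspan X"
| cspan_zero: "0 \<in> cspan X"
| cspan_add: "x \<in> cspan X \<Longrightarrow> y \<in> cspan X \<Longrightarrow> x + y \<in> cspan X"
| cspan_sc_mult: "x \<in> cspan X \<Longrightarrow> sc iu c * x \<in> cspan X"

lemma cspan_subset:
  assumes "cstar_sub star iu S" "X \<subseteq> S"
  shows "cspan X \<subseteq> S"
proof
  fix x assume "x \<in> cspan X"
  then show "x \<in> S"
    by (induction rule: cspan.induct)
      (use assms in \<open>auto simp: cstar_sub_zero cstar_sub_add cstar_sub_sc_mult\<close>)
qed

lemma tendsto_zero_on_cspan:
  fixes \<Phi> :: "'i \<Rightarrow> 'a \<Rightarrow> complex"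
  assumes S: "cstar_sub star iu S" and X: "X \<subseteq> S"
    and linear: "\<And>i. clinear_on iu S (\<Phi> i) (*)"
    and lim: "\<And>x. x \<in> X \<Longrightarrow> ((\<lambda>i. \<Phi> i x) \<longlongrightarrow> 0) F"
    and x: "x \<in> cspan X"
  shows "((\<lambda>i. \<Phi> i x) \<longlongrightarrow> 0) F"
  using x
proof (induction rule: cspan.induct)
  case cspan_zero
  have "\<Phi> i (sc iu 0 * 0) = 0 * \<Phi> i 0" for i
    using linear[of i] cstar_sub_zero[OF S] unfolding clinear_on_def by blast
  then show ?case by simp
next
  case (cspan_add x y)
  then have "x \<in> S" "y \<in> S" using cspan_subset[OF S X] by auto
  then show ?case using tendsto_add[OF cspan_add.IH] linear by (simp add: clinear_on_def)
next
  case (cspan_sc_mult x c)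
  then have "x \<in> S" using cspan_subset[OF S X] by auto
  then show ?case
    using tendsto_mult_right_zero[OF cspan_sc_mult.IH, of c] linear by (simp add: clinear_on_def)
qed (rule lim)

lemma tendsto_zero_on_closure_cspan:
  fixes \<Phi> :: "'i \<Rightarrow> 'a \<Rightarrow> complex"
  assumes S: "cstar_sub star iu S" and X: "X \<subseteq> S" and dense: "S \<subseteq> closure (cspan X)"
    and linear: "\<And>i. clinear_on iu S (\<Phi> i) (*)"
    and bound: "\<And>i x. x \<in> S \<Longrightarrow> cmod (\<Phi> i x) \<le> K * norm x"
    and lim: "\<And>x. x \<in> X \<Longrightarrow> ((\<lambda>i. \<Phi> i x) \<longlongrightarrow> 0) F"
    and z: "z \<in> S"
  shows "((\<lambda>i. \<Phi> i z) \<longlongrightarrow> 0) F"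
proof -
  have add: "\<Phi> i (x + y) = \<Phi> i x + \<Phi> i y" if "x \<in> S" "y \<in> S" for i x y
    using linear[of i] that by (simp add: clinear_on_def)
  have span_lim: "((\<lambda>i. \<Phi> i x) \<longlongrightarrow> 0) F" if "x \<in> cspan X" for x
    using S X linear lim that by (rule tendsto_zero_on_cspan)
  show ?thesis unfolding tendsto_iff
  proof (intro allI impI)
    fix e :: real assume "e > 0"
    define K' where "K' = \<bar>K\<bar> + 1"
    have "K' > 0" unfolding K'_def by simp
    obtain y where y: "y \<in> cspan X" "dist y z < e / (2 * K')"
      using subsetD[OF dense z] \<open>e > 0\<close> \<open>K' > 0\<close> unfolding closure_approachable
      by (metis divide_pos_pos mult_pos_pos zero_less_numeral)
    have "y \<in> S" using y(1) cspan_subset[OF S X] by auto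
    have "cmod (\<Phi> i (z - y)) < e / 2" for i
    proof -
      have "cmod (\<Phi> i (z - y)) \<le> K' * norm (z - y)"
        using bound[OF cstar_sub_diff[OF S z \<open>y \<in> S\<close>], of i] unfolding K'_def
        by (smt (verit) mult_right_mono norm_ge_zero)
      also have "\<dots> < K' * (e / (2 * K'))"
        using y(2) \<open>K' > 0\<close>
        by (intro mult_strict_left_mono) (simp_all add: dist_norm norm_minus_commute)
      finally show ?thesis using \<open>K' > 0\<close> by simp
    qed
    moreover have "\<forall>\<^sub>F i in F. dist (\<Phi> i y) 0 < e / 2"
      using tendstoD[OF span_lim[OF y(1)], of "e / 2"] \<open>e > 0\<close> by simp
    ultimately show "\<forall>\<^sub>F i in F. dist (\<Phi> i z) 0 < e"
    proof (elim eventually_mono)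
      fix i assume "dist (\<Phi> i y) 0 < e / 2"
      moreover have "\<Phi> i z = \<Phi> i y + \<Phi> i (z - y)"
        using add[OF \<open>y \<in> S\<close> cstar_sub_diff[OF S z \<open>y \<in> S\<close>]] by simp
      ultimately show "dist (\<Phi> i z) 0 < e"
        using \<open>cmod (\<Phi> i (z - y)) < e / 2\<close> norm_triangle_ineq[of "\<Phi> i y" "\<Phi> i (z - y)"] by simp
    qed
  qed
qed

lemma tendsto_zero_trilinear_on_closure_cspan:
  fixes T :: "'i \<Rightarrow> 'a \<Rightarrow> 'a \<Rightarrow> 'a \<Rightarrow> complex"
  assumes S: "cstar_sub star iu S" and X: "X \<subseteq> S" and dense: "S \<subseteq> closure (cspan X)"
    and linear1: "\<And>i c w. c \<in> S \<Longrightarrow> w \<in> S \<Longrightarrow> clinear_on iu S (\<lambda>v. T i v c w) (*)"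
    and linear2: "\<And>i v w. v \<in> S \<Longrightarrow> w \<in> S \<Longrightarrow> clinear_on iu S (\<lambda>c. T i v c w) (*)"
    and linear3: "\<And>i v c. v \<in> S \<Longrightarrow> c \<in> S \<Longrightarrow> clinear_on iu S (\<lambda>w. T i v c w) (*)"
    and bound: "\<And>i v c w. v \<in> S \<Longrightarrow> c \<in> S \<Longrightarrow> w \<in> S \<Longrightarrow>
      cmod (T i v c w) \<le> K * (norm v * norm c * norm w)"
    and lim: "\<And>v c w. v \<in> X \<Longrightarrow> c \<in> X \<Longrightarrow> w \<in> X \<Longrightarrow> ((\<lambda>i. T i v c w) \<longlongrightarrow> 0) F"
    and vcw: "v \<in> S" "c \<in> S" "w \<in> S"
  shows "((\<lambda>i. T i v c w) \<longlongrightarrow> 0) F"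
proof -
  note extend = tendsto_zero_on_closure_cspan[OF S X dense]
  have lim1: "((\<lambda>i. T i v c w) \<longlongrightarrow> 0) F" if "v \<in> S" "c \<in> X" "w \<in> X" for v c w
  proof (rule extend[where \<Phi> = "\<lambda>i v. T i v c w" and K = "K * norm c * norm w"])
    show "clinear_on iu S (\<lambda>v. T i v c w) (*)" for i using that X by (intro linear1) auto
    show "cmod (T i x c w) \<le> K * norm c * norm w * norm x" if "x \<in> S" for i x
      using bound[of x c w i] that \<open>c \<in> X\<close> \<open>w \<in> X\<close> X by (auto simp: mult_ac)
  qed (use that lim in auto)
  have lim2: "((\<lambda>i. T i v c w) \<longlongrightarrow> 0) F" if "v \<in> S" "c \<in> S" "w \<in> X" for v c w
  proof (rule extend[where \<Phi> = "\<lambda>i c. T i v c w" and K = "K * norm v * norm w"])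
    show "clinear_on iu S (\<lambda>c. T i v c w) (*)" for i using that X by (intro linear2) auto
    show "cmod (T i v x w) \<le> K * norm v * norm w * norm x" if "x \<in> S" for i x
      using bound[of v x w i] that \<open>v \<in> S\<close> \<open>w \<in> X\<close> X by (auto simp: mult_ac)
  qed (use that lim1 in auto)
  show ?thesis
  proof (rule extend[where \<Phi> = "\<lambda>i w. T i v c w" and K = "K * norm v * norm c"])
    show "clinear_on iu S (\<lambda>w. T i v c w) (*)" for i using vcw by (intro linear3)
    show "cmod (T i v c x) \<le> K * norm v * norm c * norm x" if "x \<in> S" for i x
      using bound[of v c x i] that vcw by (auto simp: mult_ac)
  qed (use vcw lim2 in auto)
qed

end

section \<open>Bounds for states\<close>

locale cstar_state = unital_cstar +
  fixes S :: "'a set" and \<phi> :: "'a \<Rightarrow> complex"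
  assumes subalgebra: "cstar_sub star iu S" and state: "is_state star iu S \<phi>"
begin

lemma state_add: "x \<in> S \<Longrightarrow> y \<in> S \<Longrightarrow> \<phi> (x + y) = \<phi> x + \<phi> y"
  and state_sc_mult: "x \<in> S \<Longrightarrow> \<phi> (sc iu c * x) = c * \<phi> x"
  and state_one: "\<phi> 1 = 1"
  and state_positive: "x \<in> S \<Longrightarrow> Im (\<phi> (star x * x)) = 0 \<and> Re (\<phi> (star x * x)) \<ge> 0"
  using state by (simp_all add: is_state_def clinear_on_def)

lemma state_sc: "\<phi> (sc iu c) = c"
  using state_sc_mult[OF cstar_sub_one[OF subalgebra], of c] by (simp add: state_one)

lemma state_minus: "x \<in> S \<Longrightarrow> \<phi> (- x) = - \<phi> x"
  using state_sc_mult[of x "-1"] by (simp add: sc_minus_one_mult)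

lemma state_diff: "x \<in> S \<Longrightarrow> y \<in> S \<Longrightarrow> \<phi> (x - y) = \<phi> x - \<phi> y"
  using state_add[of x "- y"] state_minus[of y] cstar_sub_minus[OF subalgebra, of y] by simp

lemma state_scaleR: "x \<in> S \<Longrightarrow> \<phi> (r *\<^sub>R x) = complex_of_real r * \<phi> x"
  using state_sc_mult[of x "complex_of_real r"] by (simp add: sc_of_real_mult)

lemma state_minus_sc_zero: "x \<in> S \<Longrightarrow> \<phi> (x - sc iu (\<phi> x)) = 0"
  by (simp add: state_diff cstar_sub_sc[OF subalgebra] state_sc)

lemma state_selfadjoint_real:
  assumes h: "h \<in> S" "star h = h"
  shows "Im (\<phi> h) = 0"
proof -
  have S1: "1 + h \<in> S" "1 - h \<in> S"
    using h cstar_sub_one cstar_sub_add cstar_sub_diff subalgebra by auto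
  have "star (1 + h) * (1 + h) - star (1 - h) * (1 - h) = h + h + h + h"
    using h by (simp add: star_add star_diff algebra_simps)
  then have "\<phi> (h + h + h + h) = \<phi> (star (1 + h) * (1 + h)) - \<phi> (star (1 - h) * (1 - h))"
    by (metis S1 state_diff cstar_sub_mult[OF subalgebra] cstar_sub_star[OF subalgebra])
  moreover have "\<phi> (h + h + h + h) = 4 * \<phi> h"
    using h cstar_sub_add[OF subalgebra] by (simp add: state_add)
  ultimately have "Im (4 * \<phi> h) = Im (\<phi> (star (1 + h) * (1 + h))) - Im (\<phi> (star (1 - h) * (1 - h)))"
    by simp
  then show ?thesis using state_positive[OF S1(1)] state_positive[OF S1(2)] by simp
qed

lemma state_selfadjoint_le_one:
  assumes "h \<in> S" "star h = h" "norm h < 1"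
  shows "Re (\<phi> h) \<le> 1"
proof -
  obtain k where k: "k \<in> S" "star k = k" "k * k = 1 - h"
    using selfadjoint_sqrt_one_minus[OF subalgebra assms] .
  have "0 \<le> Re (\<phi> (star k * k))" using state_positive[OF k(1)] by simp
  also have "\<phi> (star k * k) = 1 - \<phi> h"
    using k state_diff[OF cstar_sub_one[OF subalgebra] assms(1)] by (simp add: state_one)
  finally show ?thesis by simp
qed

lemma state_selfadjoint_bound:
  assumes h: "h \<in> S" "star h = h"
  shows "\<bar>Re (\<phi> h)\<bar> \<le> norm h"
proof (rule dense_ge)
  fix t assume t: "norm h < t"
  then have "t > 0" using norm_ge_zero[of h] by linarith
  have "Re (\<phi> (s *\<^sub>R h)) \<le> 1" if "s = 1 / t \<or> s = - 1 / t" for s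
  proof (rule state_selfadjoint_le_one)
    show "s *\<^sub>R h \<in> S" "star (s *\<^sub>R h) = s *\<^sub>R h"
      using h by (simp_all add: cstar_sub_scaleR[OF subalgebra] star_scaleR)
    have "norm (s *\<^sub>R h) = norm h / t" using that \<open>t > 0\<close> by auto
    moreover have "norm h / t < 1" using t \<open>t > 0\<close> by simp
    ultimately show "norm (s *\<^sub>R h) < 1" by simp
  qed
  from this[of "1 / t"] this[of "- 1 / t"] show "\<bar>Re (\<phi> h)\<bar> \<le> t"
    using \<open>t > 0\<close> h(1)
    by (auto simp: state_scaleR state_minus cstar_sub_scaleR[OF subalgebra] field_simps abs_le_iff)
qed

lemma state_norm_bound:
  assumes "x \<in> S"
  shows "cmod (\<phi> x) \<le> 2 * norm x"
proof -
  obtain h1 h2 where h: "h1 \<in> S" "h2 \<in> S" "star h1 = h1" "star h2 = h2" "x = h1 + iu * h2"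
    "norm h1 \<le> norm x" "norm h2 \<le> norm x"
    using cartesian_decomposition[OF subalgebra assms] by metis
  have "\<phi> x = \<phi> h1 + \<i> * \<phi> h2"
    using h by (metis sc_ii state_add state_sc_mult cstar_sub_sc_mult subalgebra)
  then have "cmod (\<phi> x) \<le> \<bar>Re (\<phi> h1)\<bar> + \<bar>Re (\<phi> h2)\<bar>"
    using norm_triangle_ineq[of "\<phi> h1" "\<i> * \<phi> h2"] h
    by (simp add: norm_mult cmod_eq_Re state_selfadjoint_real)
  then show ?thesis
    using state_selfadjoint_bound[OF h(1,3)] state_selfadjoint_bound[OF h(2,4)] h(6,7) by linarith
qed

lemma state_star:
  assumes "x \<in> S"
  shows "\<phi> (star x) = cnj (\<phi> x)"
proof -
  obtain h1 h2 where h: "h1 \<in> S" "h2 \<in> S" "star h1 = h1" "star h2 = h2" "x = h1 + iu * h2"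
    "star x = h1 - iu * h2"
    using cartesian_decomposition[OF subalgebra assms] by metis
  have iu: "iu * y = sc iu \<i> * y" for y by (simp add: sc_ii)
  have "\<phi> x = \<phi> h1 + \<i> * \<phi> h2" "\<phi> (star x) = \<phi> h1 - \<i> * \<phi> h2"
    using h cstar_sub_sc_mult[OF subalgebra] by (simp_all add: iu state_add state_diff state_sc_mult)
  then show ?thesis
    using state_selfadjoint_real[OF h(1,3)] state_selfadjoint_real[OF h(2,4)]
    by (simp add: complex_eq_iff)
qed

end

section \<open>Reduced words in the free product\<close>

locale crossed_product_free_product = unital_cstar star iu
  for star :: "'a::{real_normed_algebra_1,banach} \<Rightarrow> 'a" and iu :: 'a +
  fixes B A1 A2 A :: "'a set" and \<alpha> :: "'g::group_add \<Rightarrow> 'a \<Rightarrow> 'a" and u :: "'g \<Rightarrow> 'a"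
    and \<phi> :: "'a \<Rightarrow> complex"
  assumes infinite_group: "infinite (UNIV :: 'g set)"
    and crossed_product: "reduced_crossed_product star iu B \<alpha> u A1"
    and state_invariant: "\<And>g b. b \<in> B \<Longrightarrow> \<phi> (\<alpha> g b) = \<phi> b"
    and state_vanishes: "\<And>g b. b \<in> B \<Longrightarrow> g \<noteq> 0 \<Longrightarrow> \<phi> (b * u g) = 0"
    and A2_subalgebra: "cstar_sub star iu A2"
    and A2_nontrivial: "A2 \<noteq> range (sc iu)"
    and A2_faithful: "faithful_state star iu A2 \<phi>"
    and A_def: "A = cgen star iu (A1 \<union> A2)"
    and A_state: "is_state star iu A \<phi>"
    and A_gns_faithful: "gns_faithful star A \<phi>"
    and free: "free_pair \<phi> A1 A2"
begin

lemma A_subalgebra: "cstar_sub star iu A"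
  unfolding A_def by (rule cstar_sub_cgen)

sublocale cstar_state star iu A \<phi>
  by unfold_locales (rule A_subalgebra, rule A_state)

lemma B_subalgebra: "cstar_sub star iu B"
  and u_unitary: "star (u g) * u g = 1" "u g * star (u g) = 1"
  and u_add: "u (g + h) = u g * u h"
  and u_covariant: "b \<in> B \<Longrightarrow> u g * b * star (u g) = \<alpha> g b"
  and A1_eq: "A1 = cgen star iu (B \<union> range u)"
  and star_action: "star_action star iu B \<alpha>"
  using crossed_product by (simp_all add: reduced_crossed_product_def)

lemma alpha_in_B: "b \<in> B \<Longrightarrow> \<alpha> g b \<in> B"
  using star_action unfolding star_action_def bij_betw_def by blast

lemma A1_subset_A: "A1 \<subseteq> A" and A2_subset_A: "A2 \<subseteq> A"
  unfolding A_def using subset_cgen[of "A1 \<union> A2"] by simp_all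

lemma B_subset_A1: "B \<subseteq> A1" and u_in_A1: "u g \<in> A1"
  unfolding A1_eq using subset_cgen[of "B \<union> range u"] by auto

lemma A_one: "1 \<in> A"
  and A_mult: "x \<in> A \<Longrightarrow> y \<in> A \<Longrightarrow> x * y \<in> A"
  and A_sc_mult: "x \<in> A \<Longrightarrow> sc iu c * x \<in> A"
  and A_star: "x \<in> A \<Longrightarrow> star x \<in> A"
  and u_in_A: "u g \<in> A"
  using A_subalgebra u_in_A1 A1_subset_A
  by (auto simp: cstar_sub_one cstar_sub_mult cstar_sub_sc_mult cstar_sub_star)

lemma u_cancel_left [simp]: "u g * (star (u g) * x) = x"
  and star_u_cancel_left [simp]: "star (u g) * (u g * x) = x"
  by (simp_all add: mult.assoc[symmetric] u_unitary)

lemma u_zero: "u 0 = 1"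
  using u_add[of 0 0] u_unitary(1)[of 0] by (metis add_0 star_u_cancel_left mult_1_right)

lemma star_u: "star (u g) = u (- g)"
  using u_add[of g "- g"] u_zero by (metis add.right_inverse mult_1_right star_u_cancel_left)

lemma u_mult_B: "b \<in> B \<Longrightarrow> u g * b = \<alpha> g b * u g"
  using u_covariant[of b g] by (metis mult.assoc mult_1_right u_unitary(1))

lemma norm_u: "norm (u g) = 1"
  using norm_star_mult_self[of "u g"] u_unitary(1)[of g] norm_ge_zero[of "u g"]
  by (auto simp: power2_eq_1_iff)

text \<open>The monomials \<open>b * u g\<close> span a dense subalgebra of \<open>A1\<close> and serve as its letters in
  reduced words: unlike general elements of \<open>A1\<close>, they stay monomials under conjugation by
  \<open>u g\<close>, and \<open>\<phi> (u g * m)\<close> vanishes for all but one \<open>g\<close>.\<close>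

definition monomials :: "'a set" where
  "monomials = {b * u g | b g. b \<in> B}"

lemma monomials_subset_A1: "monomials \<subseteq> A1"
  unfolding monomials_def using B_subset_A1 u_in_A1 cstar_sub_mult[OF cstar_sub_cgen] A1_eq
  by blast

lemma B_subset_monomials: "B \<subseteq> monomials"
proof
  fix b assume "b \<in> B"
  moreover have "b = b * u 0" by (simp add: u_zero)
  ultimately show "b \<in> monomials" unfolding monomials_def by blast
qed

lemma u_in_monomials: "u g \<in> monomials"
  unfolding monomials_def using cstar_sub_one[OF B_subalgebra] by force

lemma monomials_mult: "m \<in> monomials \<Longrightarrow> m' \<in> monomials \<Longrightarrow> m * m' \<in> monomials"
proof -
  assume "m \<in> monomials" "m' \<in> monomials"
  then obtain b g b' h where m: "m = b * u g" "m' = b' * u h" "b \<in> B" "b' \<in> B"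
    unfolding monomials_def by blast
  have "m * m' = b * (u g * b') * u h" using m by (simp only: mult.assoc)
  also have "\<dots> = (b * \<alpha> g b') * u (g + h)" using m(4) by (simp only: u_mult_B u_add mult.assoc)
  finally have "m * m' = (b * \<alpha> g b') * u (g + h)" .
  then show ?thesis
    unfolding monomials_def using m cstar_sub_mult[OF B_subalgebra] alpha_in_B by blast
qed

lemma monomials_star: "m \<in> monomials \<Longrightarrow> star m \<in> monomials"
proof -
  assume "m \<in> monomials"
  then obtain b g where m: "m = b * u g" "b \<in> B" unfolding monomials_def by blast
  then have "star m = \<alpha> (- g) (star b) * u (- g)"
    using u_mult_B[OF cstar_sub_star[OF B_subalgebra m(2)]] by (simp add: star_mult star_u)
  then show ?thesis
    unfolding monomials_def using m cstar_sub_star[OF B_subalgebra] alpha_in_B by blast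
qed

lemma monomials_minus_sc: "m \<in> monomials \<Longrightarrow> m - sc iu (\<phi> m) \<in> monomials"
proof -
  assume "m \<in> monomials"
  then obtain b g where m: "m = b * u g" "b \<in> B" unfolding monomials_def by blast
  show ?thesis
  proof (cases "g = 0")
    case True
    then have "m - sc iu (\<phi> m) \<in> B"
      using m u_zero cstar_sub_diff[OF B_subalgebra] cstar_sub_sc[OF B_subalgebra] by simp
    then show ?thesis using B_subset_monomials by blast
  next
    case False
    then show ?thesis using m \<open>m \<in> monomials\<close> state_vanishes by simp
  qed
qed

lemma eventually_state_u_mult_monomial:
  assumes "m \<in> monomials"
  shows "\<forall>\<^sub>F g in cofinite. \<phi> (u g * m) = 0"
proof -
  obtain b h where m: "m = b * u h" "b \<in> B" using assms unfolding monomials_def by blast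
  have "\<phi> (u g * m) = 0" if "g \<noteq> - h" for g
  proof -
    have "u g * m = (u g * b) * u h" using m by (simp only: mult.assoc)
    also have "\<dots> = \<alpha> g b * u (g + h)" using m(2) by (simp only: u_mult_B u_add mult.assoc)
    finally show ?thesis using that state_vanishes alpha_in_B m by (simp add: add_eq_0_iff2)
  qed
  then show ?thesis by (auto simp: eventually_cofinite intro: finite_subset[of _ "{- h}"])
qed

lemma state_u_conj_monomial:
  assumes "m \<in> monomials"
  shows "\<phi> (u g * m * star (u g)) = \<phi> m"
proof -
  obtain b h where m: "m = b * u h" "b \<in> B" using assms unfolding monomials_def by blast
  have "u g * m * star (u g) = (u g * b) * (u h * u (- g))" using m by (simp only: star_u mult.assoc)
  also have "\<dots> = \<alpha> g b * (u g * (u h * u (- g)))" using m(2) by (simp only: u_mult_B mult.assoc)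
  also have "u g * (u h * u (- g)) = u (g + h + - g)" by (simp only: u_add mult.assoc)
  finally have conj: "u g * m * star (u g) = \<alpha> g b * u (g + h + - g)" .
  show ?thesis
  proof (cases "h = 0")
    case True
    then show ?thesis using conj m state_invariant u_zero by simp
  next
    case False
    then have "g + h + - g \<noteq> 0"
      by (metis add.assoc add.left_inverse add.right_neutral add_minus_cancel)
    then show ?thesis using conj m False state_vanishes alpha_in_B by simp
  qed
qed

definition letters :: "bool \<Rightarrow> 'a set" where
  "letters k = (if k then monomials else A2)"

definition centered :: "bool \<Rightarrow> 'a set" where
  "centered k = {x \<in> letters k. \<phi> x = 0}"

lemma letters_in_A: "x \<in> letters k \<Longrightarrow> x \<in> A"
  unfolding letters_def using monomials_subset_A1 A1_subset_A A2_subset_A by (auto split: if_splits)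

lemma centered_in_A: "x \<in> centered k \<Longrightarrow> x \<in> A"
  unfolding centered_def using letters_in_A by auto

lemma letters_mult: "x \<in> letters k \<Longrightarrow> y \<in> letters k \<Longrightarrow> x * y \<in> letters k"
  unfolding letters_def using monomials_mult cstar_sub_mult[OF A2_subalgebra] by auto

lemma letters_star: "x \<in> letters k \<Longrightarrow> star x \<in> letters k"
  unfolding letters_def using monomials_star cstar_sub_star[OF A2_subalgebra] by auto

lemma letters_minus_sc: "x \<in> letters k \<Longrightarrow> x - sc iu (\<phi> x) \<in> centered k"
proof -
  assume x: "x \<in> letters k"
  then have "x - sc iu (\<phi> x) \<in> letters k"
    using monomials_minus_sc cstar_sub_diff[OF A2_subalgebra] cstar_sub_sc[OF A2_subalgebra]
    by (auto simp: letters_def split: if_splits)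
  then show ?thesis
    unfolding centered_def using state_minus_sc_zero[OF letters_in_A[OF x]] by simp
qed

lemma centered_star: "x \<in> centered k \<Longrightarrow> star x \<in> centered k"
  unfolding centered_def using letters_star letters_in_A by (auto simp: state_star)

lemma u_centered: "g \<noteq> 0 \<Longrightarrow> u g \<in> centered True"
  unfolding centered_def letters_def
  using u_in_monomials state_vanishes[OF cstar_sub_one[OF B_subalgebra]] by simp

lemma star_u_centered: "g \<noteq> 0 \<Longrightarrow> star (u g) \<in> centered True"
  using u_centered[of "- g"] by (simp add: star_u)

text \<open>\<open>reduced_product k l y\<close>: \<open>y\<close> is the product of a reduced word, i.e. of centered letters
  taken alternately from the two factors (\<open>True\<close> tags \<open>A1\<close>, \<open>False\<close> tags \<open>A2\<close>), whose first and
  last letters come from the factors \<open>k\<close> and \<open>l\<close>.\<close>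

inductive reduced_product :: "bool \<Rightarrow> bool \<Rightarrow> 'a \<Rightarrow> bool" where
  letter: "x \<in> centered k \<Longrightarrow> reduced_product k k x"
| cons: "x \<in> centered k \<Longrightarrow> reduced_product (\<not> k) l z \<Longrightarrow> reduced_product k l (x * z)"

lemma reduced_product_mult:
  "reduced_product k l x \<Longrightarrow> reduced_product (\<not> l) m y \<Longrightarrow> reduced_product k m (x * y)"
  by (induction rule: reduced_product.induct) (auto simp: mult.assoc intro: reduced_product.intros)

lemma reduced_product_star: "reduced_product k l y \<Longrightarrow> reduced_product l k (star y)"
proof (induction rule: reduced_product.induct)
  case (letter x k)
  then show ?case by (simp add: centered_star reduced_product.letter)
next
  case (cons x k l z)
  then show ?case
    using reduced_product_mult[of l "\<not> k" "star z" k "star x"]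
    by (simp add: star_mult centered_star reduced_product.letter)
qed

lemma reduced_product_in_A: "reduced_product k l y \<Longrightarrow> y \<in> A"
  by (induction rule: reduced_product.induct) (simp_all add: centered_in_A A_mult)

lemma reduced_product_word:
  "reduced_product k l y \<Longrightarrow> \<exists>ws. ws \<noteq> [] \<and> distinct_adj (map fst ws) \<and> fst (hd ws) = k \<and>
     (\<forall>p \<in> set ws. snd p \<in> centered (fst p)) \<and> y = prod_list (map snd ws)"
proof (induction rule: reduced_product.induct)
  case (letter x k)
  then show ?case by (intro exI[of _ "[(k, x)]"]) simp
next
  case (cons x k l z)
  then obtain ws where "ws \<noteq> []" "distinct_adj (map fst ws)" "fst (hd ws) = (\<not> k)"
    "\<forall>p \<in> set ws. snd p \<in> centered (fst p)" "z = prod_list (map snd ws)"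
    by blast
  with cons.hyps(1) show ?case
    by (intro exI[of _ "(k, x) # ws"]) (auto simp: distinct_adj_Cons hd_map)
qed

lemma reduced_product_state: "reduced_product k l y \<Longrightarrow> \<phi> y = 0"
proof -
  assume "reduced_product k l y"
  then obtain ws where ws: "ws \<noteq> []" "distinct_adj (map fst ws)"
    "\<forall>p \<in> set ws. snd p \<in> centered (fst p)" "y = prod_list (map snd ws)"
    using reduced_product_word by blast
  have "\<phi> (prod_list (map snd ws)) = 0"
  proof (rule free[unfolded free_pair_def, rule_format], intro conjI allI impI)
    show "map snd ws \<noteq> []" "length (map fst ws) = length (map snd ws)" using ws(1) by simp_all
  next
    fix i assume "i < length (map snd ws)"
    then have "snd (ws ! i) \<in> centered (fst (ws ! i))" using ws(3) by simp
    then show "(if map fst ws ! i then map snd ws ! i \<in> A1 else map snd ws ! i \<in> A2)"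
      "\<phi> (map snd ws ! i) = 0"
      using \<open>i < length (map snd ws)\<close> monomials_subset_A1
      by (auto simp: centered_def letters_def split: if_splits)
  next
    fix i assume "Suc i < length (map snd ws)"
    then show "map fst ws ! i \<noteq> map fst ws ! Suc i"
      using ws(2) distinct_adj_nth[of "map fst ws" i] by simp
  qed
  then show ?thesis using ws(4) by simp
qed

definition reduced_products :: "'a set" where
  "reduced_products = insert 1 {y. \<exists>k l. reduced_product k l y}"

lemma reduced_products_in_A: "y \<in> reduced_products \<Longrightarrow> y \<in> A"
  unfolding reduced_products_def using reduced_product_in_A A_one by auto

lemma reduced_products_star: "y \<in> reduced_products \<Longrightarrow> star y \<in> reduced_products"
  unfolding reduced_products_def by (force dest: reduced_product_star)

lemma letter_mult_reduced_products_starting: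
  assumes x: "x \<in> letters k" and z: "z = 1 \<or> (\<exists>l. reduced_product (\<not> k) l z)"
  shows "x * z \<in> cspan reduced_products"
proof -
  have "x * z = sc iu (\<phi> x) * z + (x - sc iu (\<phi> x)) * z" by (simp add: algebra_simps)
  moreover have "z \<in> reduced_products" using z by (auto simp: reduced_products_def)
  moreover have "\<exists>l. reduced_product k l ((x - sc iu (\<phi> x)) * z)"
    using z letters_minus_sc[OF x] by (metis mult_1_right reduced_product.letter reduced_product.cons)
  then have "(x - sc iu (\<phi> x)) * z \<in> reduced_products"
    by (auto simp: reduced_products_def)
  ultimately show ?thesis by (metis cspan_add cspan_base cspan_sc_mult)
qed

lemma letter_mult_reduced_products:
  assumes x: "x \<in> letters k" and y: "y \<in> reduced_products"
  shows "x * y \<in> cspan reduced_products"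
proof -
  note starting = letter_mult_reduced_products_starting
  from y consider "y = 1" | k' l where "reduced_product k' l y"
    unfolding reduced_products_def by blast
  then show ?thesis
  proof cases
    case 1
    then show ?thesis using starting[OF x, of 1] by simp
  next
    case (2 k' l)
    show ?thesis
    proof (cases "k' = k")
      case False
      then have "k' = (\<not> k)" by blast
      then show ?thesis using starting[OF x] 2 by blast
    next
      case True
      from 2 show ?thesis
      proof (cases rule: reduced_product.cases)
        case letter
        then show ?thesis using starting[of "x * y" k 1] letters_mult[OF x] True by (simp add: centered_def)
      next
        case (cons x' z)
        then have "x * x' \<in> letters k" using letters_mult[OF x] True by (simp add: centered_def)
        moreover have "\<exists>l. reduced_product (\<not> k) l z" using cons True by auto
        ultimately show ?thesis using starting[of "x * x'" k z] cons by (simp add: mult.assoc)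
      qed
    qed
  qed
qed

lemma letter_mult_cspan:
  assumes "x \<in> letters k" and "y \<in> cspan reduced_products"
  shows "x * y \<in> cspan reduced_products"
  using assms(2)
proof (induction rule: cspan.induct)
  case (cspan_base y)
  then show ?case using letter_mult_reduced_products[OF assms(1)] by blast
qed (simp_all add: distrib_left mult_sc_left_commute cspan.intros)

lemma reduced_product_mult_cspan:
  "reduced_product k l x \<Longrightarrow> y \<in> cspan reduced_products \<Longrightarrow> x * y \<in> cspan reduced_products"
  by (induction rule: reduced_product.induct) (auto simp: mult.assoc centered_def intro: letter_mult_cspan)

lemma cspan_reduced_products_mult:
  assumes "x \<in> cspan reduced_products" and y: "y \<in> cspan reduced_products"
  shows "x * y \<in> cspan reduced_products"
  using assms(1)
proof (induction rule: cspan.induct)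
  case (cspan_base x)
  then show ?case using y reduced_product_mult_cspan by (auto simp: reduced_products_def)
qed (simp_all add: distrib_right mult.assoc cspan.intros)

lemma cspan_reduced_products_star:
  "x \<in> cspan reduced_products \<Longrightarrow> star x \<in> cspan reduced_products"
  by (induction rule: cspan.induct)
    (simp_all add: reduced_products_star star_add star_sc_mult cspan.intros)

lemma A_subset_closure_cspan: "A \<subseteq> closure (cspan reduced_products)"
proof -
  have one: "1 \<in> cspan reduced_products"
    by (simp add: cspan_base reduced_products_def)
  have closure: "cstar_sub star iu (closure (cspan reduced_products))"
    by (intro cstar_sub_closure one cspan_add cspan_reduced_products_mult cspan_sc_mult
        cspan_reduced_products_star)
  have letters: "letters k \<subseteq> closure (cspan reduced_products)" for k
    using letter_mult_cspan[OF _ one] closure_subset by fastforce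
  have "A1 \<subseteq> closure (cspan reduced_products)"
    unfolding A1_eq using letters[of True] B_subset_monomials u_in_monomials
    by (intro cgen_least[OF closure]) (auto simp: letters_def)
  moreover have "A2 \<subseteq> closure (cspan reduced_products)"
    using letters[of False] by (simp add: letters_def)
  ultimately show ?thesis unfolding A_def by (intro cgen_least[OF closure]) auto
qed

lemma eventually_u_mult_centered:
  assumes "x \<in> centered k"
  shows "\<forall>\<^sub>F g in cofinite. reduced_product True k (u g * x)"
proof (cases k)
  case True
  then have "x \<in> monomials" using assms by (simp add: centered_def letters_def)
  show ?thesis
    using eventually_state_u_mult_monomial[OF \<open>x \<in> monomials\<close>]
  proof (rule eventually_mono)
    fix g assume "\<phi> (u g * x) = 0"
    then have "u g * x \<in> centered True"
      using monomials_mult[OF u_in_monomials \<open>x \<in> monomials\<close>] by (simp add: centered_def letters_def)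
    then show "reduced_product True k (u g * x)" using True by (simp add: reduced_product.letter)
  qed
next
  case False
  show ?thesis
    using eventually_cofinite_neq[of 0] 
  proof (rule eventually_mono)
    fix g :: 'g assume "g \<noteq> 0"
    have "reduced_product False False x" using assms False by (simp add: reduced_product.letter)
    then show "reduced_product True k (u g * x)"
      using False reduced_product.cons[OF u_centered[OF \<open>g \<noteq> 0\<close>]] by simp
  qed
qed

lemma eventually_u_mult_reduced_product:
  assumes "reduced_product k l y"
  shows "\<forall>\<^sub>F g in cofinite. reduced_product True l (u g * y)"
  using assms
proof (cases rule: reduced_product.cases)
  case letter
  then show ?thesis using eventually_u_mult_centered by simp
next
  case (cons x z)
  then have x: "x \<in> centered k" and z: "reduced_product (\<not> k) l z" and y: "y = x * z" by simp_all
  show ?thesis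
    using eventually_u_mult_centered[OF x]
  proof (rule eventually_mono)
    fix g assume "reduced_product True k (u g * x)"
    then have "reduced_product True l ((u g * x) * z)" using z reduced_product_mult by blast
    then show "reduced_product True l (u g * y)" by (simp add: y mult.assoc)
  qed
qed

lemma eventually_reduced_product_mult_star_u:
  assumes "reduced_product k l y"
  shows "\<forall>\<^sub>F g in cofinite. reduced_product k True (y * star (u g))"
  using eventually_u_mult_reduced_product[OF reduced_product_star[OF assms]]
  by (rule eventually_mono) (drule reduced_product_star, simp add: star_mult)

lemma eventually_u_conj_reduced_product:
  assumes "reduced_product k l y"
  shows "\<forall>\<^sub>F g in cofinite. reduced_product True True (u g * y * star (u g))"
  using assms
proof (cases rule: reduced_product.cases)
  case letter
  then have y: "y \<in> centered k" by simp
  show ?thesis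
  proof (cases k)
    case True
    then have "y \<in> monomials" "\<phi> y = 0" using y by (simp_all add: centered_def letters_def)
    then have "u g * y * star (u g) \<in> centered True" for g
      using monomials_mult[OF monomials_mult[OF u_in_monomials] monomials_star[OF u_in_monomials]]
        state_u_conj_monomial by (simp add: centered_def letters_def)
    then show ?thesis by (simp add: reduced_product.letter)
  next
    case False
    show ?thesis
      using eventually_conj[OF eventually_u_mult_centered[OF y] eventually_cofinite_neq[of 0]]
    proof (rule eventually_mono)
      fix g :: 'g assume "reduced_product True k (u g * y) \<and> g \<noteq> 0"
      then show "reduced_product True True (u g * y * star (u g))"
        using False star_u_centered reduced_product_mult reduced_product.letter by fastforce
    qed
  qed
next
  case (cons x z)
  then have x: "x \<in> centered k" and z: "reduced_product (\<not> k) l z" and y: "y = x * z" by simp_all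
  show ?thesis
    using eventually_conj[OF eventually_u_mult_centered[OF x]
        eventually_reduced_product_mult_star_u[OF z]]
  proof (rule eventually_mono)
    fix g assume "reduced_product True k (u g * x) \<and> reduced_product (\<not> k) True (z * star (u g))"
    then have "reduced_product True True ((u g * x) * (z * star (u g)))"
      using reduced_product_mult by blast
    then show "reduced_product True True (u g * y * star (u g))" by (simp add: y mult.assoc)
  qed
qed

lemma eventually_u_mult_reduced_products:
  "y \<in> reduced_products \<Longrightarrow> \<forall>\<^sub>F g in cofinite. \<exists>l. reduced_product True l (u g * y)"
  unfolding reduced_products_def
  using eventually_cofinite_neq[of 0] u_centered reduced_product.letter
    eventually_u_mult_reduced_product
  by (fastforce elim: eventually_mono)

lemma eventually_reduced_products_mult_star_u:
  "y \<in> reduced_products \<Longrightarrow> \<forall>\<^sub>F g in cofinite. \<exists>k. reduced_product k True (y * star (u g))"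
  unfolding reduced_products_def
  using eventually_cofinite_neq[of 0] star_u_centered reduced_product.letter
    eventually_reduced_product_mult_star_u
  by (fastforce elim: eventually_mono)

section \<open>Asymptotic freeness of the conjugates of A2\<close>

definition u_conj :: "'g \<Rightarrow> 'a \<Rightarrow> 'a" where
  "u_conj g x = star (u g) * x * u g"

lemma u_conj_in_A: "x \<in> A \<Longrightarrow> u_conj g x \<in> A"
  unfolding u_conj_def by (simp add: A_mult A_star u_in_A)

lemma norm_u_conj_le: "norm (u_conj g x) \<le> norm x"
proof -
  have "norm (u_conj g x) \<le> norm (star (u g)) * norm x * norm (u g)"
    unfolding u_conj_def by (metis norm_mult_ineq mult_right_mono norm_ge_zero order_trans)
  then show ?thesis by (simp add: norm_u)
qed

lemma u_conj_mult: "u_conj g x * u_conj g y = u_conj g (x * y)"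
  by (simp add: u_conj_def mult.assoc u_cancel_left)

lemma u_conj_add_sc: "u_conj g (sc iu c + x) = sc iu c + u_conj g x"
  by (simp add: u_conj_def distrib_left distrib_right sc_commute mult.assoc)

lemma eventually_state_u_conj_vanishes:
  assumes v: "v \<in> reduced_products" and w: "w \<in> reduced_products"
  shows "\<forall>\<^sub>F g in cofinite. \<forall>s. reduced_product False False s \<longrightarrow> \<phi> (v * u_conj g s * w) = 0"
  using eventually_conj[OF eventually_reduced_products_mult_star_u[OF v]
      eventually_u_mult_reduced_products[OF w]]
proof (rule eventually_mono)
  fix g assume "(\<exists>k. reduced_product k True (v * star (u g))) \<and>
    (\<exists>l. reduced_product True l (u g * w))"
  then obtain k l where vg: "reduced_product k True (v * star (u g))"
    and wg: "reduced_product True l (u g * w)" by blast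
  show "\<forall>s. reduced_product False False s \<longrightarrow> \<phi> (v * u_conj g s * w) = 0"
  proof (intro allI impI)
    fix s assume "reduced_product False False s"
    then have "reduced_product k False (v * star (u g) * s)"
      using reduced_product_mult[OF vg, of False s] by simp
    then have "reduced_product k l ((v * star (u g)) * s * (u g * w))"
      using reduced_product_mult[of k False _ l "u g * w"] wg by simp
    then show "\<phi> (v * u_conj g s * w) = 0"
      using reduced_product_state by (simp add: u_conj_def mult.assoc)
  qed
qed

lemma eventually_state_u_conj_free_unit:
  assumes a: "a \<in> centered False" and v: "v \<in> reduced_products" and w: "w \<in> reduced_products"
  shows "\<forall>\<^sub>F g in cofinite. \<phi> (v * u_conj g (star a) * u_conj g a * w) = \<phi> (star a * a) * \<phi> (v * w)"
proof -
  define p where "p = \<phi> (star a * a)"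
  define e where "e = star a * a - sc iu p"
  have "star a * a \<in> letters False"
    using a letters_mult letters_star by (simp add: centered_def)
  then have e: "e \<in> centered False" unfolding e_def p_def by (rule letters_minus_sc)
  have split: "v * u_conj g (star a) * u_conj g a * w = sc iu p * (v * w) + v * u_conj g e * w" for g
  proof -
    have "u_conj g (star a) * u_conj g a = sc iu p + u_conj g e"
      unfolding u_conj_mult e_def by (simp flip: u_conj_add_sc)
    then show ?thesis by (simp add: distrib_left distrib_right mult.assoc mult_sc_left_commute)
  qed
  have vA: "v \<in> A" and wA: "w \<in> A" using v w by (simp_all add: reduced_products_in_A)
  show ?thesis
    using eventually_state_u_conj_vanishes[OF v w]
  proof (rule eventually_mono)
    fix g assume "\<forall>s. reduced_product False False s \<longrightarrow> \<phi> (v * u_conj g s * w) = 0"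
    then have "\<phi> (v * u_conj g e * w) = 0" using e by (simp add: reduced_product.letter)
    moreover have "v * u_conj g e * w \<in> A" "v * w \<in> A" "sc iu p * (v * w) \<in> A"
      using vA wA centered_in_A[OF e] by (simp_all add: A_mult A_sc_mult u_conj_in_A)
    ultimately show "\<phi> (v * u_conj g (star a) * u_conj g a * w) = \<phi> (star a * a) * \<phi> (v * w)"
      unfolding split by (simp add: p_def state_add state_sc_mult)
  qed
qed

lemma eventually_state_u_conj_free_reduced:
  assumes a: "a \<in> centered False" and v: "v \<in> reduced_products" and w: "w \<in> reduced_products"
    and c: "reduced_product k l c"
  shows "\<forall>\<^sub>F g in cofinite. \<phi> (v * u_conj g (star a) * c * u_conj g a * w) = 0"
  using eventually_conj[OF eventually_state_u_conj_vanishes[OF v w] eventually_u_conj_reduced_product[OF c]]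
proof (rule eventually_mono)
  fix g assume g: "(\<forall>s. reduced_product False False s \<longrightarrow> \<phi> (v * u_conj g s * w) = 0) \<and>
    reduced_product True True (u g * c * star (u g))"
  have "reduced_product False False (star a)"
    using centered_star[OF a] by (rule reduced_product.letter)
  then have "reduced_product False True (star a * (u g * c * star (u g)))"
    using g reduced_product_mult[of False False "star a" True] by simp
  then have "reduced_product False False (star a * (u g * c * star (u g)) * a)"
    using reduced_product_mult[of False True _ False a] reduced_product.letter[OF a] by simp
  then have "\<phi> (v * u_conj g (star a * (u g * c * star (u g)) * a) * w) = 0" using g by blast
  then show "\<phi> (v * u_conj g (star a) * c * u_conj g a * w) = 0"
    by (simp add: u_conj_def mult.assoc)
qed

lemma eventually_state_u_conj_free:
  assumes a: "a \<in> centered False"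
    and v: "v \<in> reduced_products" and c: "c \<in> reduced_products" and w: "w \<in> reduced_products"
  shows "\<forall>\<^sub>F g in cofinite.
    \<phi> (v * u_conj g (star a) * c * u_conj g a * w) = \<phi> (star a * a) * \<phi> c * \<phi> (v * w)"
proof -
  from c consider "c = 1" | k l where "reduced_product k l c" unfolding reduced_products_def by blast
  then show ?thesis
  proof cases
    case 1
    then show ?thesis using eventually_state_u_conj_free_unit[OF a v w] by (simp add: state_one)
  next
    case (2 k l)
    then show ?thesis
      using eventually_state_u_conj_free_reduced[OF a v w 2] reduced_product_state[OF 2] by simp
  qed
qed

lemma clinear_on_state_mult:
  assumes "p \<in> A" "q \<in> A"
  shows "clinear_on iu A (\<lambda>x. \<phi> (p * x * q)) (*)"
  unfolding clinear_on_def using assms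
  by (simp add: distrib_left distrib_right state_add state_sc_mult mult_sc_left_commute mult.assoc A_mult)

definition conj_defect :: "'a \<Rightarrow> 'g \<Rightarrow> 'a \<Rightarrow> 'a \<Rightarrow> 'a \<Rightarrow> complex" where
  "conj_defect a g v c w =
     \<phi> (v * u_conj g (star a) * c * u_conj g a * w) - \<phi> (star a * a) * \<phi> c * \<phi> (v * w)"

lemma conj_defect_linear:
  assumes "a \<in> A" "v \<in> A" "c \<in> A" "w \<in> A"
  shows "clinear_on iu A (\<lambda>v. conj_defect a g v c w) (*)"
    and "clinear_on iu A (\<lambda>c. conj_defect a g v c w) (*)"
    and "clinear_on iu A (\<lambda>w. conj_defect a g v c w) (*)"
proof -
  let ?X' = "u_conj g (star a)" and ?X = "u_conj g a"
  have X: "?X' \<in> A" "?X \<in> A" using assms(1) by (simp_all add: u_conj_in_A A_star)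
  have "(\<lambda>v. conj_defect a g v c w) =
      (\<lambda>x. \<phi> (1 * x * (?X' * c * ?X * w)) - \<phi> (star a * a) * \<phi> c * \<phi> (1 * x * w))"
    by (simp add: conj_defect_def mult.assoc)
  then show "clinear_on iu A (\<lambda>v. conj_defect a g v c w) (*)"
    by (simp only:)
      (intro clinear_on_diff_mult clinear_on_state_mult; use assms X in \<open>simp add: A_one A_mult\<close>)
  have "(\<lambda>c. conj_defect a g v c w) =
      (\<lambda>x. \<phi> ((v * ?X') * x * (?X * w)) - \<phi> (star a * a) * \<phi> (v * w) * \<phi> (1 * x * 1))"
    by (simp add: conj_defect_def mult.assoc mult_ac)
  then show "clinear_on iu A (\<lambda>c. conj_defect a g v c w) (*)"
    by (simp only:)
      (intro clinear_on_diff_mult clinear_on_state_mult; use assms X in \<open>simp add: A_one A_mult\<close>)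
  have "(\<lambda>w. conj_defect a g v c w) =
      (\<lambda>x. \<phi> ((v * ?X' * c * ?X) * x * 1) - \<phi> (star a * a) * \<phi> c * \<phi> (v * x * 1))"
    by (simp add: conj_defect_def)
  then show "clinear_on iu A (\<lambda>w. conj_defect a g v c w) (*)"
    by (simp only:)
      (intro clinear_on_diff_mult clinear_on_state_mult; use assms X in \<open>simp add: A_one A_mult\<close>)
qed

lemma conj_defect_bound:
  assumes "a \<in> A" "v \<in> A" "c \<in> A" "w \<in> A"
  shows "cmod (conj_defect a g v c w)
    \<le> (2 * (norm a)\<^sup>2 + 4 * cmod (\<phi> (star a * a))) * (norm v * norm c * norm w)"
proof -
  let ?X' = "u_conj g (star a)" and ?X = "u_conj g a"
  have "norm (v * ?X' * c * ?X * w) \<le> norm v * norm ?X' * norm c * norm ?X * norm w"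
    by (meson norm_mult_ineq mult_right_mono norm_ge_zero order_trans)
  also have "\<dots> \<le> norm v * norm a * norm c * norm a * norm w"
    using norm_u_conj_le[of g "star a"] norm_u_conj_le[of g a]
    by (intro mult_mono mult_right_mono mult_left_mono) auto
  finally have "norm (v * ?X' * c * ?X * w) \<le> (norm a)\<^sup>2 * (norm v * norm c * norm w)"
    by (simp add: power2_eq_square mult_ac)
  moreover have "v * ?X' * c * ?X * w \<in> A" using assms by (simp add: A_mult A_star u_conj_in_A)
  ultimately have first: "cmod (\<phi> (v * ?X' * c * ?X * w)) \<le> 2 * (norm a)\<^sup>2 * (norm v * norm c * norm w)"
    using state_norm_bound[of "v * ?X' * c * ?X * w"] by linarith
  have "cmod (\<phi> (star a * a) * \<phi> c * \<phi> (v * w))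
      \<le> cmod (\<phi> (star a * a)) * (2 * norm c) * (2 * norm (v * w))"
    unfolding norm_mult using assms state_norm_bound
    by (intro mult_mono mult_left_mono) (auto simp: A_mult)
  also have "\<dots> \<le> cmod (\<phi> (star a * a)) * (2 * norm c) * (2 * (norm v * norm w))"
    by (intro mult_left_mono norm_mult_ineq) auto
  finally have second: "cmod (\<phi> (star a * a) * \<phi> c * \<phi> (v * w))
      \<le> 4 * cmod (\<phi> (star a * a)) * (norm v * norm c * norm w)"
    by (simp add: mult_ac)
  show ?thesis
    using norm_triangle_ineq4[of "\<phi> (v * ?X' * c * ?X * w)" "\<phi> (star a * a) * \<phi> c * \<phi> (v * w)"]
      first second
    unfolding conj_defect_def by (simp add: algebra_simps)
qed

lemma tendsto_conj_defect:
  assumes a: "a \<in> centered False" and "v \<in> A" "c \<in> A" "w \<in> A"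
  shows "((\<lambda>g. conj_defect a g v c w) \<longlongrightarrow> 0) cofinite"
proof (rule tendsto_zero_trilinear_on_closure_cspan[OF A_subalgebra _ A_subset_closure_cspan])
  have aA: "a \<in> A" using a by (rule centered_in_A)
  show "reduced_products \<subseteq> A" using reduced_products_in_A by blast
  show "clinear_on iu A (\<lambda>v. conj_defect a g v c w) (*)"
    "clinear_on iu A (\<lambda>c. conj_defect a g v c w) (*)"
    "clinear_on iu A (\<lambda>w. conj_defect a g v c w) (*)" if "v \<in> A" "c \<in> A" "w \<in> A" for g v c w
    using conj_defect_linear[OF aA that] by simp_all
  show "cmod (conj_defect a g v c w)
    \<le> (2 * (norm a)\<^sup>2 + 4 * cmod (\<phi> (star a * a))) * (norm v * norm c * norm w)"
    if "v \<in> A" "c \<in> A" "w \<in> A" for g v c w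
    using conj_defect_bound[OF aA that] .
  show "((\<lambda>g. conj_defect a g v c w) \<longlongrightarrow> 0) cofinite"
    if "v \<in> reduced_products" "c \<in> reduced_products" "w \<in> reduced_products" for v c w
    using eventually_state_u_conj_free[OF a that]
    by (intro tendsto_eventually) (simp add: conj_defect_def)
qed (use assms in auto)

lemma state_mult_commuting:
  assumes a: "a \<in> centered False" "\<phi> (star a * a) \<noteq> 0"
    and x: "x \<in> A" and commute: "\<And>g. x * u_conj g a = u_conj g a * x"
    and v: "v \<in> A" and w: "w \<in> A"
  shows "\<phi> (v * x * w) = \<phi> x * \<phi> (v * w)"
proof -
  define F where "F g = \<phi> (v * u_conj g (star a) * x * u_conj g a * w)" for g
  have "x * (u_conj g a * y) = u_conj g a * (x * y)" for g y
    by (metis mult.assoc commute)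
  then have "F = (\<lambda>g. \<phi> (v * u_conj g (star a) * 1 * u_conj g a * (x * w)))"
    unfolding F_def by (simp add: mult.assoc)
  then have "(F \<longlongrightarrow> \<phi> (star a * a) * \<phi> 1 * \<phi> (v * (x * w))) cofinite"
    using tendsto_conj_defect[OF a(1) v A_one A_mult[OF x w]]
    unfolding conj_defect_def LIM_zero_iff by (simp only:)
  moreover have "(F \<longlongrightarrow> \<phi> (star a * a) * \<phi> x * \<phi> (v * w)) cofinite"
    using tendsto_conj_defect[OF a(1) v x w] unfolding conj_defect_def LIM_zero_iff F_def .
  moreover have "cofinite \<noteq> (bot :: 'g filter)" using infinite_group by simp
  ultimately have "\<phi> (star a * a) * \<phi> 1 * \<phi> (v * (x * w)) = \<phi> (star a * a) * \<phi> x * \<phi> (v * w)"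
    using tendsto_unique by blast
  then show ?thesis using a(2) by (simp add: state_one mult.assoc)
qed

lemma centered_A2_nonzero: "\<exists>a \<in> centered False. \<phi> (star a * a) \<noteq> 0"
proof -
  obtain a' where a': "a' \<in> A2" "a' \<notin> range (sc iu)"
    using A2_nontrivial cstar_sub_sc[OF A2_subalgebra] by blast
  define a where "a = a' - sc iu (\<phi> a')"
  have "a \<in> centered False" unfolding a_def using a' letters_minus_sc by (simp add: letters_def)
  moreover have "a \<noteq> 0" unfolding a_def using a' by auto
  then have "\<phi> (star a * a) \<noteq> 0"
    using A2_faithful \<open>a \<in> centered False\<close> by (auto simp: faithful_state_def centered_def letters_def)
  ultimately show ?thesis by blast
qed

lemma relative_commutant_trivial:
  assumes x: "x \<in> A"
    and commute: "\<forall>d \<in> cgen star iu (\<Union>g. (\<lambda>a. star (u g) * a * u g) ` A2). x * d = d * x"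
  shows "x \<in> range (sc iu)"
proof -
  obtain a where a: "a \<in> centered False" "\<phi> (star a * a) \<noteq> 0" using centered_A2_nonzero by blast
  have "u_conj g a \<in> (\<Union>g. (\<lambda>a. star (u g) * a * u g) ` A2)" for g
    using a(1) by (auto simp: u_conj_def centered_def letters_def)
  then have a_commute: "x * u_conj g a = u_conj g a * x" for g
    using commute subset_cgen by blast
  define x0 where "x0 = x - sc iu (\<phi> x)"
  have x0: "x0 \<in> A" unfolding x0_def using x by (simp add: cstar_sub_diff cstar_sub_sc A_subalgebra)
  have "\<phi> (star y * star x0 * x0 * y) = 0" if y: "y \<in> A" for y
  proof -
    have "star y * star x0 * x0 * y = star y * star x0 * x * y - sc iu (\<phi> x) * (star y * star x0 * y)"
      unfolding x0_def by (simp add: right_diff_distrib left_diff_distrib mult.assoc mult_sc_left_commute)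
    moreover have "\<phi> (star y * star x0 * x * y) = \<phi> x * \<phi> (star y * star x0 * y)"
      using x0 y by (intro state_mult_commuting[OF a x a_commute _ y]) (simp add: A_mult A_star)
    moreover have "star y * star x0 * x * y \<in> A" "star y * star x0 * y \<in> A"
      using x x0 y by (simp_all add: A_mult A_star)
    ultimately show ?thesis by (simp add: state_diff state_sc_mult A_sc_mult)
  qed
  then have "x0 = 0" using A_gns_faithful x0 unfolding gns_faithful_def by blast
  then show ?thesis unfolding x0_def by simp
qed

end

theorem mainTheorem4:
  fixes star :: "'a::{real_normed_algebra_1,banach} \<Rightarrow> 'a" and iu :: 'a
    and B A1 A2 A :: "'a set" and \<alpha> :: "'g::group_add \<Rightarrow> 'a \<Rightarrow> 'a" and u :: "'g \<Rightarrow> 'a"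
    and \<phi> :: "'a \<Rightarrow> complex"
  assumes amb: "cstar_ambient star iu"
    and G_inf: "infinite (UNIV :: 'g set)"
    and cp: "reduced_crossed_product star iu B \<alpha> u A1"
    and phi1_faithful: "faithful_state star iu B \<phi>"
    and phi1_inv: "\<forall>g. \<forall>b\<in>B. \<phi> (\<alpha> g b) = \<phi> b"
    and phi1_ext: "\<forall>g. \<forall>b\<in>B. g \<noteq> 0 \<longrightarrow> \<phi> (b * u g) = 0"
    and A2_sub: "cstar_sub star iu A2"
    and A2_nontriv: "A2 \<noteq> range (sc iu)"
    and phi2_faithful: "faithful_state star iu A2 \<phi>"
    and A_def: "A = cgen star iu (A1 \<union> A2)"
    and phi_state: "is_state star iu A \<phi>"
    and phi_gns: "gns_faithful star A \<phi>"
    and phi_free: "free_pair \<phi> A1 A2"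
  shows "(\<forall>x\<in>A. (\<forall>d\<in>cgen star iu (\<Union>g. (\<lambda>a. star (u g) * a * u g) ` A2). x * d = d * x)
              \<longrightarrow> x \<in> range (sc iu))
       \<and> (\<forall>x\<in>A. (\<forall>d\<in>cgen star iu (B \<union> (\<Union>g. (\<lambda>a. star (u g) * a * u g) ` A2)). x * d = d * x)
              \<longrightarrow> x \<in> range (sc iu))"
proof -
  interpret crossed_product_free_product star iu B A1 A2 A \<alpha> u \<phi>
    by unfold_locales (use amb G_inf cp phi1_inv phi1_ext A2_sub A2_nontriv phi2_faithful A_def
        phi_state phi_gns phi_free in auto)
  have "cgen star iu (\<Union>g. (\<lambda>a. star (u g) * a * u g) ` A2)
      \<subseteq> cgen star iu (B \<union> (\<Union>g. (\<lambda>a. star (u g) * a * u g) ` A2))"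
    by (rule cgen_mono) blast
  then show ?thesis using relative_commutant_trivial by blast
qed

end
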